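(* Suppose $f,g\in\mathcal A_c$. (a) For each $t>0$, $\|f\ast\Theta_t-g\ast\Theta_t\|\le\|f-g\|$. (b) Let $\epsilon>0$. Suppose $u,v:\mathbb R\times(0,\infty)\to\mathbb R$ are such that $u(\cdot,t),v(\cdot,t)\in\mathcal A_c$ for $t>0$, $\|u(\cdot,t)-f\|\to0$ and $\|v(\cdot,t)-g\|\to0$ as $t\to0^+$. If $\|f-g\|<\epsilon$ then for all sufficiently small $t>0$ we have $\|u(\cdot,t)-v(\cdot,t)\|<2\epsilon$.
   Context: Let $\mathcal B_c$ be the set of continuous $F:\mathbb R\to\mathbb R$ such that $\lim_{x\to\pm\infty}F(x)$ exist as real numbers and $\lim_{x\to-\infty}F(x)=0$. Let $\mathcal A_c$ be the set of distributions $f$ on $\mathbb R$ with $f=F'$ (distributional derivative) for some (unique) $F\in\mathcal B_c$, the primitive of $f$. The Alexiewicz norm is $\|f\|=\sup_{x<y}|F(y)-F(x)|$, and the integral is $\int_a^bf=F(b)-F(a)$. For $f\in\mathcal A_c$ and $h$ of bounded variation, $\int_{-\infty}^\infty fh:=F(\infty)h(\infty)-\int_{-\infty}^\infty F\,dh$ (Henstock–Stieltjes), and the convolution is $f\ast h(x)=\int_{-\infty}^\infty f(\xi)h(x-\xi)\,d\xi$ in this sense. The heat kernel is $\Theta_t(x)=(4\pi t)^{-1/2}e^{-x^2/(4t)}$, $t>0$. *)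

theory Defs
  imports "HOL-Analysis.Analysis"
begin

definition Bc :: "(real \<Rightarrow> real) \<Rightarrow> bool" where
  "Bc F \<longleftrightarrow> continuous_on UNIV F \<and> (\<exists>l. (F \<longlongrightarrow> l) at_top) \<and> (F \<longlongrightarrow> 0) at_bot"

text \<open>An element f of A_c is represented by its (unique) primitive F with Bc F;
  its integral over [x,y] is F y - F x.\<close>
definition intg_prim :: "(real \<Rightarrow> real) \<Rightarrow> real \<Rightarrow> real \<Rightarrow> real" where
  "intg_prim F x y = F y - F x"

definition fun_Ac_prim :: "(real \<Rightarrow> real) \<Rightarrow> (real \<Rightarrow> real) \<Rightarrow> bool" where
  "fun_Ac_prim w F \<longleftrightarrow> Bc F \<and> (\<forall>a b. a \<le> b \<longrightarrow> (w has_integral (F b - F a)) {a..b})"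

definition fun_in_Ac :: "(real \<Rightarrow> real) \<Rightarrow> bool" where
  "fun_in_Ac w \<longleftrightarrow> (\<exists>F. fun_Ac_prim w F)"

definition intg_fun :: "(real \<Rightarrow> real) \<Rightarrow> real \<Rightarrow> real \<Rightarrow> real" where
  "intg_fun w x y = integral {x..y} w"

text \<open>Alexiewicz norm, given the interval-integral functional (x,y) |-> int_x^y f.\<close>
definition anorm :: "(real \<Rightarrow> real \<Rightarrow> real) \<Rightarrow> real" where
  "anorm I = (SUP p \<in> {p :: real \<times> real. fst p < snd p}. \<bar>I (fst p) (snd p)\<bar>)"

definition heat :: "real \<Rightarrow> real \<Rightarrow> real" where
  "heat t x = (4 * pi * t) powr (-1/2) * exp (- (x^2) / (4 * t))"

text \<open>Convolution f * Theta_t (x) = F(inf) h(inf) - int F dh with h(xi) = Theta_t(x - xi);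
  since h is smooth with integrable derivative, the Stieltjes integral int F dh
  is written as int F(xi) h'(xi) dxi.\<close>
definition conv_heat :: "(real \<Rightarrow> real) \<Rightarrow> real \<Rightarrow> real \<Rightarrow> real" where
  "conv_heat F t x =
     Lim at_top F * Lim at_top (\<lambda>\<xi>. heat t (x - \<xi>))
     - integral UNIV (\<lambda>\<xi>. F \<xi> * deriv (\<lambda>\<eta>. heat t (x - \<eta>)) \<xi>)"

end

theory Submission
  imports Defs "HOL-Probability.Distributions" "HOL-Real_Asymp.Real_Asymp"
begin

(*
  (a) The primitive of f * \<Theta>_t is F * \<Theta>_t (Fubini and the fundamental theorem of
  calculus, with F * \<Theta>_t \<in> B_c by dominated convergence). Hence
    \<integral>_x^y (f * \<Theta>_t - g * \<Theta>_t) = \<integral> (\<integral>_(x-s)^(y-s) (f - g)) \<Theta>_t(s) ds,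
  and the inner integral is bounded by ||f - g|| while \<Theta>_t is a probability density.
  (b) is the triangle inequality ||u - v|| \<le> ||u - f|| + ||f - g|| + ||g - v|| < \<epsilon>/2 + \<epsilon> + \<epsilon>/2.
*)

section \<open>Primitives and the Alexiewicz norm\<close>

lemma bounded_if_tendsto_at_top_at_bot:
  fixes F :: "real \<Rightarrow> real"
  assumes cont: "continuous_on UNIV F" and top: "(F \<longlongrightarrow> l) at_top" and bot: "(F \<longlongrightarrow> l') at_bot"
  obtains B where "\<And>x. \<bar>F x\<bar> \<le> B"
proof -
  obtain N where N: "\<And>x. x \<ge> N \<Longrightarrow> \<bar>F x - l\<bar> < 1"
    using tendstoD[OF top, of 1] by (auto simp: eventually_at_top_linorder dist_real_def)
  obtain M where M: "\<And>x. x \<le> M \<Longrightarrow> \<bar>F x - l'\<bar> < 1"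
    using tendstoD[OF bot, of 1] by (auto simp: eventually_at_bot_linorder dist_real_def)
  have "compact (F ` {M..N})"
    by (rule compact_continuous_image) (auto intro: continuous_on_subset[OF cont])
  then obtain C where C: "\<And>x. x \<in> {M..N} \<Longrightarrow> \<bar>F x\<bar> \<le> C"
    using compact_imp_bounded bounded_real by (metis image_eqI)
  have "\<bar>F x\<bar> \<le> max (\<bar>l\<bar> + 1) (max (\<bar>l'\<bar> + 1) C)" for x
    using N[of x] M[of x] C[of x] by (cases "x \<ge> N"; cases "x \<le> M"; auto)
  then show ?thesis using that by blast
qed

lemma Bc_bounded:
  assumes "Bc F" obtains B where "\<And>x. \<bar>F x\<bar> \<le> B"
  using assms bounded_if_tendsto_at_top_at_bot unfolding Bc_def by metis

lemma Bc_borel_measurable: "Bc F \<Longrightarrow> F \<in> borel_measurable borel"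
  by (auto simp: Bc_def intro: borel_measurable_continuous_onI)

lemma intg_prim_bounded:
  assumes "Bc F" obtains K where "\<And>x y. \<bar>intg_prim F x y\<bar> \<le> K"
proof -
  obtain B where B: "\<And>x. \<bar>F x\<bar> \<le> B" using Bc_bounded[OF assms] by blast
  have "\<bar>intg_prim F x y\<bar> \<le> 2 * B" for x y
    using abs_triangle_ineq4[of "F y" "F x"] B[of x] B[of y] unfolding intg_prim_def by linarith
  then show ?thesis using that by blast
qed

lemma intg_fun_eq_intg_prim: "fun_Ac_prim w U \<Longrightarrow> x \<le> y \<Longrightarrow> intg_fun w x y = intg_prim U x y"
  by (simp add: fun_Ac_prim_def intg_fun_def intg_prim_def integral_unique)

lemma intg_fun_bounded:
  assumes "fun_in_Ac w" obtains K where "\<And>x y. x < y \<Longrightarrow> \<bar>intg_fun w x y\<bar> \<le> K"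
proof -
  obtain U where U: "fun_Ac_prim w U" using assms fun_in_Ac_def by blast
  obtain K where "\<And>x y. \<bar>intg_prim U x y\<bar> \<le> K"
    using intg_prim_bounded U fun_Ac_prim_def by blast
  then show ?thesis using that intg_fun_eq_intg_prim[OF U] by (metis less_imp_le)
qed

lemma anorm_least: "(\<And>x y. x < y \<Longrightarrow> \<bar>I x y\<bar> \<le> M) \<Longrightarrow> anorm I \<le> M"
  unfolding anorm_def by (rule cSUP_least) (auto intro: exI[of _ "(0::real, 1::real)"])

text \<open>The bound matters: the supremum of an unbounded set of reals is an unspecified value.\<close>
lemma anorm_upper:
  assumes "\<And>x y. x < y \<Longrightarrow> \<bar>I x y\<bar> \<le> K" and "x < y"
  shows "\<bar>I x y\<bar> \<le> anorm I"
proof -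
  have "bdd_above ((\<lambda>p. \<bar>I (fst p) (snd p)\<bar>) ` {p :: real \<times> real. fst p < snd p})"
    using assms(1) by (intro bdd_aboveI2[of _ _ K]) auto
  from cSUP_upper[OF _ this, of "(x, y)"] show ?thesis
    using assms(2) unfolding anorm_def by simp
qed

lemma anorm_minus_commute: "anorm (\<lambda>x y. I x y - J x y) = anorm (\<lambda>x y. J x y - I x y)"
  unfolding anorm_def by (simp add: abs_minus_commute)

lemma anorm_triangle:
  assumes "\<And>x y. x < y \<Longrightarrow> \<bar>I x y\<bar> \<le> A" "\<And>x y. x < y \<Longrightarrow> \<bar>J x y\<bar> \<le> B"
    "\<And>x y. x < y \<Longrightarrow> \<bar>K x y\<bar> \<le> C"
  shows "anorm (\<lambda>x y. I x y - K x y) \<le> anorm (\<lambda>x y. I x y - J x y) + anorm (\<lambda>x y. J x y - K x y)"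
proof (rule anorm_least)
  fix x y :: real assume "x < y"
  have "\<bar>I x y - J x y\<bar> \<le> anorm (\<lambda>x y. I x y - J x y)"
    using assms by (intro anorm_upper[OF _ \<open>x < y\<close>, of _ "A + B"])
      (auto intro: order_trans[OF abs_triangle_ineq4 add_mono])
  moreover have "\<bar>J x y - K x y\<bar> \<le> anorm (\<lambda>x y. J x y - K x y)"
    using assms by (intro anorm_upper[OF _ \<open>x < y\<close>, of _ "B + C"])
      (auto intro: order_trans[OF abs_triangle_ineq4 add_mono])
  ultimately show "\<bar>I x y - K x y\<bar> \<le> anorm (\<lambda>x y. I x y - J x y) + anorm (\<lambda>x y. J x y - K x y)"
    by linarith
qed

section \<open>The heat kernel\<close>

definition dheat :: "real \<Rightarrow> real \<Rightarrow> real" where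
  "dheat t s = - s / (2 * t) * heat t s"

lemma heat_nonneg: "heat t x \<ge> 0"
  unfolding heat_def by simp

lemma borel_measurable_heat [measurable]: "heat t \<in> borel_measurable borel"
  unfolding heat_def by measurable

lemma heat_eq_normal_density: "t > 0 \<Longrightarrow> heat t = normal_density 0 (sqrt (2 * t))"
  by (rule ext) (simp add: heat_def normal_density_def powr_minus_divide powr_half_sqrt
      real_sqrt_divide field_simps)

lemma integrable_heat: "t > 0 \<Longrightarrow> integrable lborel (heat t)"
  using integrable_normal_density[of "sqrt (2 * t)" 0] by (simp add: heat_eq_normal_density)

lemma integral_heat: "t > 0 \<Longrightarrow> (\<integral>x. heat t x \<partial>lborel) = 1"
  using integral_normal_density[of "sqrt (2 * t)" 0] by (simp add: heat_eq_normal_density)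

lemma integrable_dheat:
  assumes "t > 0" shows "integrable lborel (dheat t)"
proof -
  have "dheat t = (\<lambda>x. - 1 / (2 * t) * (normal_density 0 (sqrt (2 * t)) x * (x - 0) ^ 1))"
    by (auto simp: dheat_def heat_eq_normal_density[OF assms])
  then show ?thesis
    using integrable_normal_moment[of "sqrt (2 * t)" 0 1] assms by simp
qed

lemma has_real_derivative_heat: "t > 0 \<Longrightarrow> (heat t has_real_derivative dheat t s) (at s)"
  unfolding heat_def dheat_def
  by (auto intro!: derivative_eq_intros simp: field_simps power2_eq_square)

lemma continuous_on_dheat: "t > 0 \<Longrightarrow> continuous_on UNIV (dheat t)"
  unfolding dheat_def heat_def by (intro continuous_intros) auto

section \<open>Convolution of a bounded function with an integrable kernel\<close>

lemma integrable_bounded_mult: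
  fixes F k :: "real \<Rightarrow> real"
  assumes "F \<in> borel_measurable borel" "\<And>x. \<bar>F x\<bar> \<le> B" "integrable lborel k"
  shows "integrable lborel (\<lambda>x. F x * k x)"
proof (rule Bochner_Integration.integrable_bound[of _ "\<lambda>x. B * \<bar>k x\<bar>"])
  show "integrable lborel (\<lambda>x. B * \<bar>k x\<bar>)"
    using assms(3) by (intro integrable_mult_right integrable_abs)
  show "AE x in lborel. norm (F x * k x) \<le> norm (B * \<bar>k x\<bar>)"
    using assms(2) by (intro AE_I2)
      (metis abs_ge_self abs_ge_zero abs_mult mult_right_mono order_trans real_norm_def)
qed (use assms in \<open>measurable\<close>)

lemma abs_integral_bounded_mult_le:
  fixes F k :: "real \<Rightarrow> real"
  assumes "F \<in> borel_measurable borel" "\<And>x. \<bar>F x\<bar> \<le> B" "integrable lborel k"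
  shows "\<bar>\<integral>x. F x * k x \<partial>lborel\<bar> \<le> B * (\<integral>x. \<bar>k x\<bar> \<partial>lborel)"
proof -
  have "\<bar>\<integral>x. F x * k x \<partial>lborel\<bar> \<le> (\<integral>x. \<bar>F x * k x\<bar> \<partial>lborel)"
    using integral_norm_bound[of lborel "\<lambda>x. F x * k x"] by simp
  also have "\<dots> \<le> (\<integral>x. B * \<bar>k x\<bar> \<partial>lborel)"
    using assms by (intro integral_mono integrable_abs integrable_mult_right integrable_bounded_mult)
      (auto simp: abs_mult mult_right_mono)
  finally show ?thesis by simp
qed

lemma integrable_reflect:
  fixes k :: "real \<Rightarrow> real"
  shows "integrable lborel k \<Longrightarrow> integrable lborel (\<lambda>\<xi>. k (x - \<xi>))"
  using lborel_integrable_real_affine[of k "-1" x] by simp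

lemma integral_reflect:
  fixes k :: "real \<Rightarrow> real"
  shows "(\<integral>\<xi>. k (x - \<xi>) \<partial>lborel) = (\<integral>s. k s \<partial>lborel)"
  using lborel_integral_real_affine[of "-1" k x] by simp

lemma integral_indicator_translate_derivative:
  fixes k K :: "real \<Rightarrow> real"
  assumes "continuous_on UNIV k" "\<And>s. (K has_real_derivative k s) (at s)" "a \<le> b"
  shows "(\<integral>x. indicator {a..b} x * k (x - \<xi>) \<partial>lborel) = K (b - \<xi>) - K (a - \<xi>)"
proof -
  have "(LBINT x=a..b. k (x - \<xi>)) = K (b - \<xi>) - K (a - \<xi>)"
  proof (rule interval_integral_FTC_finite)
    show "continuous_on {min a b..max a b} (\<lambda>x. k (x - \<xi>))"
      by (intro continuous_on_compose2[OF assms(1)] continuous_intros) auto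
    show "((\<lambda>x. K (x - \<xi>)) has_vector_derivative k (x - \<xi>)) (at x within {min a b..max a b})" for x
    proof -
      have "((\<lambda>x. K (x - \<xi>)) has_real_derivative k (x - \<xi>) * 1) (at x)"
        by (rule DERIV_chain2[OF assms(2)]) (auto intro!: derivative_eq_intros)
      then show ?thesis
        by (simp add: has_real_derivative_iff_has_vector_derivative has_vector_derivative_at_within)
    qed
  qed
  then show ?thesis
    using assms(3) by (simp add: interval_integral_Icc set_lebesgue_integral_def)
qed

lemma integrable_indicator_convolution:
  fixes F k :: "real \<Rightarrow> real"
  assumes F [measurable]: "F \<in> borel_measurable borel" and B: "\<And>x. \<bar>F x\<bar> \<le> B"
    and k: "integrable lborel k"
  shows "integrable (lborel \<Otimes>\<^sub>M lborel) (\<lambda>(x, \<xi>). indicator {a..b} x * (F \<xi> * k (x - \<xi>)))"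
    (is "integrable _ ?f")
proof (rule lborel_pair.Fubini_integrable)
  have [measurable]: "k \<in> borel_measurable borel"
    using k by auto
  show "?f \<in> borel_measurable (lborel \<Otimes>\<^sub>M lborel)"
    by measurable
  define C where "C = (\<integral>s. \<bar>k s\<bar> \<partial>lborel)"
  have inner_bound: "norm (\<integral>\<xi>. norm (?f (x, \<xi>)) \<partial>lborel) \<le> indicator {a..b} x * (B * C)" for x
  proof -
    have "\<bar>\<integral>\<xi>. \<bar>F \<xi>\<bar> * \<bar>k (x - \<xi>)\<bar> \<partial>lborel\<bar> \<le> B * (\<integral>\<xi>. \<bar>\<bar>k (x - \<xi>)\<bar>\<bar> \<partial>lborel)"
      using B by (intro abs_integral_bounded_mult_le integrable_abs integrable_reflect k) auto
    then show ?thesis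
      by (simp add: C_def indicator_def abs_mult integral_reflect[of "\<lambda>s. \<bar>k s\<bar>"])
  qed
  show "integrable lborel (\<lambda>x. \<integral>\<xi>. norm (?f (x, \<xi>)) \<partial>lborel)"
  proof (rule Bochner_Integration.integrable_bound)
    show "integrable lborel (\<lambda>x. indicator {a..b} x * (B * C))"
      using borel_integrable_atLeastAtMost'[of a b "\<lambda>_. B * C"] by (simp add: set_integrable_def)
    show "AE x in lborel. norm (\<integral>\<xi>. norm (?f (x, \<xi>)) \<partial>lborel) \<le> norm (indicator {a..b} x * (B * C))"
      using order_trans[OF inner_bound abs_ge_self] by (intro AE_I2) simp
  qed measurable
  show "AE x in lborel. integrable lborel (\<lambda>\<xi>. ?f (x, \<xi>))"
    using integrable_bounded_mult[OF F B integrable_reflect[OF k]] by (intro AE_I2) simp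
qed

text \<open>Fubini: integrating \<open>k (x - \<xi>)\<close> over \<open>x \<in> {a..b}\<close> first gives
  \<open>K (b - \<xi>) - K (a - \<xi>)\<close>.\<close>
lemma has_integral_convolution_derivative:
  fixes F k K :: "real \<Rightarrow> real"
  assumes F: "F \<in> borel_measurable borel" and B: "\<And>x. \<bar>F x\<bar> \<le> B"
    and k: "integrable lborel k" "continuous_on UNIV k"
    and K: "\<And>s. (K has_real_derivative k s) (at s)" and ab: "a \<le> b"
  shows "((\<lambda>x. \<integral>\<xi>. F \<xi> * k (x - \<xi>) \<partial>lborel)
           has_integral (\<integral>\<xi>. F \<xi> * (K (b - \<xi>) - K (a - \<xi>)) \<partial>lborel)) {a..b}"
    (is "(?g has_integral ?I) _")
proof -
  define f :: "real \<times> real \<Rightarrow> real" where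
    "f = (\<lambda>(x, \<xi>). indicator {a..b} x * (F \<xi> * k (x - \<xi>)))"
  have f_integrable: "integrable (lborel \<Otimes>\<^sub>M lborel) f"
    unfolding f_def by (rule integrable_indicator_convolution[OF F B k(1)])
  have "(\<integral>x. indicator {a..b} x * ?g x \<partial>lborel) = (\<integral>x. (\<integral>\<xi>. f (x, \<xi>) \<partial>lborel) \<partial>lborel)"
    by (simp add: f_def)
  also have "\<dots> = (\<integral>\<xi>. (\<integral>x. f (x, \<xi>) \<partial>lborel) \<partial>lborel)"
    using lborel_pair.Fubini_integral[of "\<lambda>x \<xi>. f (x, \<xi>)"] f_integrable by simp
  also have "\<dots> = ?I"
    using integral_indicator_translate_derivative[OF k(2) K ab]
    by (simp add: f_def mult.left_commute[of _ "F _"])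
  finally have "(\<integral>x. indicator {a..b} x * ?g x \<partial>lborel) = ?I" .
  moreover have "integrable lborel (\<lambda>x. indicator {a..b} x * ?g x)"
    using lborel_pair.integrable_fst'[OF f_integrable] by (simp add: f_def)
  ultimately have "((\<lambda>x. indicator {a..b} x * ?g x) has_integral ?I) UNIV"
    by (metis has_integral_integral_lborel)
  then have "((\<lambda>x. if x \<in> {a..b} then ?g x else 0) has_integral ?I) UNIV"
    by (rule has_integral_cong[THEN iffD1, rotated]) (simp add: indicator_def)
  then show ?thesis
    by (simp only: has_integral_restrict_UNIV)
qed

section \<open>Heat-kernel convolution of an element of A_c\<close>

text \<open>\<open>F * \<Theta>_t\<close>, the primitive of \<open>f * \<Theta>_t\<close>.\<close>
definition prim_conv_heat :: "(real \<Rightarrow> real) \<Rightarrow> real \<Rightarrow> real \<Rightarrow> real" where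
  "prim_conv_heat F t x = (\<integral>s. F (x - s) * heat t s \<partial>lborel)"

lemma prim_conv_heat_eq: "prim_conv_heat F t x = (\<integral>\<xi>. F \<xi> * heat t (x - \<xi>) \<partial>lborel)"
  using integral_reflect[of "\<lambda>s. F (x - s) * heat t s" x] by (simp add: prim_conv_heat_def)

lemma conv_heat_eq:
  assumes F: "F \<in> borel_measurable borel" "\<And>x. \<bar>F x\<bar> \<le> B" and t: "t > 0"
  shows "conv_heat F t x = (\<integral>\<xi>. F \<xi> * dheat t (x - \<xi>) \<partial>lborel)"
proof -
  have "((\<lambda>\<xi>. heat t (x - \<xi>)) \<longlongrightarrow> 0) at_top"
    using t unfolding heat_def by real_asymp
  then have "Lim at_top (\<lambda>\<xi>. heat t (x - \<xi>)) = 0"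
    by (rule tendsto_Lim[rotated]) simp
  moreover have "deriv (\<lambda>\<eta>. heat t (x - \<eta>)) \<xi> = - dheat t (x - \<xi>)" for \<xi>
  proof -
    have "((\<lambda>\<eta>. heat t (x - \<eta>)) has_real_derivative dheat t (x - \<xi>) * (- 1)) (at \<xi>)"
      by (rule DERIV_chain2[OF has_real_derivative_heat[OF t]]) (auto intro!: derivative_eq_intros)
    then show ?thesis
      by (simp add: DERIV_imp_deriv)
  qed
  moreover have "integrable lborel (\<lambda>\<xi>. F \<xi> * dheat t (x - \<xi>))"
    by (rule integrable_bounded_mult[OF F integrable_reflect[OF integrable_dheat[OF t]]])
  ultimately show ?thesis
    by (simp add: conv_heat_def integral_lborel)
qed

lemma has_integral_conv_heat:
  assumes "Bc F" and t: "t > 0" and "a \<le> b"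
  shows "(conv_heat F t has_integral (prim_conv_heat F t b - prim_conv_heat F t a)) {a..b}"
proof -
  obtain B where B: "\<And>x. \<bar>F x\<bar> \<le> B" using Bc_bounded[OF \<open>Bc F\<close>] by blast
  note F = Bc_borel_measurable[OF \<open>Bc F\<close>] B
  have "integrable lborel (\<lambda>\<xi>. F \<xi> * heat t (x - \<xi>))" for x
    by (rule integrable_bounded_mult[OF F integrable_reflect[OF integrable_heat[OF t]]])
  then have "(\<integral>\<xi>. F \<xi> * (heat t (b - \<xi>) - heat t (a - \<xi>)) \<partial>lborel)
      = prim_conv_heat F t b - prim_conv_heat F t a"
    by (simp add: prim_conv_heat_eq right_diff_distrib)
  moreover have "conv_heat F t = (\<lambda>x. \<integral>\<xi>. F \<xi> * dheat t (x - \<xi>) \<partial>lborel)"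
    using conv_heat_eq[OF F t] by blast
  ultimately show ?thesis
    using has_integral_convolution_derivative[OF F integrable_dheat[OF t] continuous_on_dheat[OF t]
        has_real_derivative_heat[OF t] \<open>a \<le> b\<close>]
    by simp
qed

lemma conv_heat_bounded:
  assumes "Bc F" and t: "t > 0"
  obtains M where "M \<ge> 0" "\<And>x. \<bar>conv_heat F t x\<bar> \<le> M"
proof -
  obtain B where B: "\<And>x. \<bar>F x\<bar> \<le> B" using Bc_bounded[OF \<open>Bc F\<close>] by blast
  note F = Bc_borel_measurable[OF \<open>Bc F\<close>] B
  have "\<bar>conv_heat F t x\<bar> \<le> B * (\<integral>s. \<bar>dheat t s\<bar> \<partial>lborel)" for x
    using abs_integral_bounded_mult_le[OF F integrable_reflect[OF integrable_dheat[OF t], of x]]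
      integral_reflect[of "\<lambda>s. \<bar>dheat t s\<bar>" x]
    by (simp add: conv_heat_eq[OF F t])
  moreover have "0 \<le> B * (\<integral>s. \<bar>dheat t s\<bar> \<partial>lborel)"
    using B[of 0] by simp
  ultimately show ?thesis using that by blast
qed

lemma continuous_on_prim_conv_heat:
  assumes "Bc F" and t: "t > 0"
  shows "continuous_on UNIV (prim_conv_heat F t)"
proof -
  obtain M where M: "M \<ge> 0" "\<And>x. \<bar>conv_heat F t x\<bar> \<le> M"
    using conv_heat_bounded[OF assms] by blast
  have le: "\<bar>prim_conv_heat F t b - prim_conv_heat F t a\<bar> \<le> M * (b - a)" if "a \<le> b" for a b
    using has_integral_bound_real[OF M(1) finite.emptyI has_integral_conv_heat[OF assms that]] M(2) that
    by simp
  have "M-lipschitz_on UNIV (prim_conv_heat F t)"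
  proof (rule lipschitz_onI)
    show "dist (prim_conv_heat F t x) (prim_conv_heat F t y) \<le> M * dist x y" for x y
      using le[of x y] le[of y x] by (cases "x \<le> y") (auto simp: dist_real_def abs_minus_commute)
  qed (use M in auto)
  then show ?thesis
    by (rule lipschitz_on_continuous_on)
qed

lemma tendsto_prim_conv_heat:
  fixes g :: "real \<Rightarrow> real"
  assumes F [measurable]: "F \<in> borel_measurable borel" and B: "\<And>x. \<bar>F x\<bar> \<le> B" and t: "t > 0"
    and lim: "(F \<longlongrightarrow> l) L" and g: "\<And>s. filterlim (\<lambda>x. g x - s) L at_top"
  shows "((\<lambda>x. prim_conv_heat F t (g x)) \<longlongrightarrow> l) at_top"
proof -
  have "((\<lambda>x. \<integral>s. F (g x - s) * heat t s \<partial>lborel) \<longlongrightarrow> (\<integral>s. l * heat t s \<partial>lborel)) at_top"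
  proof (rule integral_dominated_convergence_at_top[OF _ _ integrable_mult_right[OF integrable_heat[OF t]]])
    show "AE s in lborel. ((\<lambda>x. F (g x - s) * heat t s) \<longlongrightarrow> l * heat t s) at_top"
      using filterlim_compose[OF lim g] by (intro AE_I2 tendsto_mult_right)
    show "\<forall>\<^sub>F x in at_top. AE s in lborel. norm (F (g x - s) * heat t s) \<le> B * heat t s"
      using B heat_nonneg by (intro always_eventually allI AE_I2) (simp add: abs_mult mult_right_mono)
  qed measurable
  then show ?thesis
    using integral_heat[OF t] by (simp add: prim_conv_heat_def)
qed

lemma Bc_prim_conv_heat:
  assumes "Bc F" and t: "t > 0"
  shows "Bc (prim_conv_heat F t)"
proof -
  obtain B where B: "\<And>x. \<bar>F x\<bar> \<le> B" using Bc_bounded[OF \<open>Bc F\<close>] by blast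
  note F = Bc_borel_measurable[OF \<open>Bc F\<close>] B
  obtain l where "(F \<longlongrightarrow> l) at_top" and "(F \<longlongrightarrow> 0) at_bot"
    using \<open>Bc F\<close> by (auto simp: Bc_def)
  have "(prim_conv_heat F t \<longlongrightarrow> l) at_top"
    by (rule tendsto_prim_conv_heat[OF F t \<open>(F \<longlongrightarrow> l) at_top\<close>, of "\<lambda>x. x"]) real_asymp
  moreover have "((\<lambda>x. prim_conv_heat F t (- x)) \<longlongrightarrow> 0) at_top"
    by (rule tendsto_prim_conv_heat[OF F t \<open>(F \<longlongrightarrow> 0) at_bot\<close>]) real_asymp
  then have "(prim_conv_heat F t \<longlongrightarrow> 0) at_bot"
    by (simp add: filterlim_at_bot_mirror)
  ultimately show ?thesis
    using continuous_on_prim_conv_heat[OF assms] by (auto simp: Bc_def)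
qed

lemma fun_Ac_prim_conv_heat: "Bc F \<Longrightarrow> t > 0 \<Longrightarrow> fun_Ac_prim (conv_heat F t) (prim_conv_heat F t)"
  by (simp add: fun_Ac_prim_def Bc_prim_conv_heat has_integral_conv_heat)

lemma intg_fun_conv_heat_diff:
  assumes "Bc F" "Bc G" and t: "t > 0" and "x \<le> y"
  shows "intg_fun (conv_heat F t) x y - intg_fun (conv_heat G t) x y
    = (\<integral>s. (intg_prim F (x - s) (y - s) - intg_prim G (x - s) (y - s)) * heat t s \<partial>lborel)"
proof -
  have integrable: "integrable lborel (\<lambda>s. H (z - s) * heat t s)" if H: "Bc H" for H z
  proof -
    note [measurable] = Bc_borel_measurable[OF H]
    obtain B where "\<And>x. \<bar>H x\<bar> \<le> B" using Bc_bounded[OF H] by blast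
    then have "\<And>s. \<bar>H (z - s)\<bar> \<le> B" by blast
    show ?thesis
      by (rule integrable_bounded_mult[OF _ \<open>\<And>s. \<bar>H (z - s)\<bar> \<le> B\<close> integrable_heat[OF t]]) measurable
  qed
  show ?thesis
    using intg_fun_eq_intg_prim[OF fun_Ac_prim_conv_heat[OF _ t] \<open>x \<le> y\<close>] assms(1,2)
      integrable[OF assms(1)] integrable[OF assms(2)]
    by (simp add: intg_prim_def prim_conv_heat_def left_diff_distrib flip: Bochner_Integration.integral_diff)
qed

lemma anorm_conv_heat_diff_le:
  assumes "Bc F" "Bc G" and t: "t > 0"
  shows "anorm (\<lambda>x y. intg_fun (conv_heat F t) x y - intg_fun (conv_heat G t) x y)
    \<le> anorm (\<lambda>x y. intg_prim F x y - intg_prim G x y)"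
proof (rule anorm_least)
  fix x y :: real assume "x < y"
  obtain K1 K2 where "\<And>x y. \<bar>intg_prim F x y\<bar> \<le> K1" "\<And>x y. \<bar>intg_prim G x y\<bar> \<le> K2"
    using intg_prim_bounded assms(1,2) by metis
  then have "\<bar>intg_prim F (x - s) (y - s) - intg_prim G (x - s) (y - s)\<bar>
      \<le> anorm (\<lambda>x y. intg_prim F x y - intg_prim G x y)" for s
    using \<open>x < y\<close> by (intro anorm_upper[where K = "K1 + K2"])
      (auto intro: order_trans[OF abs_triangle_ineq4 add_mono])
  then have "\<bar>\<integral>s. (intg_prim F (x - s) (y - s) - intg_prim G (x - s) (y - s)) * heat t s \<partial>lborel\<bar>
      \<le> anorm (\<lambda>x y. intg_prim F x y - intg_prim G x y) * (\<integral>s. \<bar>heat t s\<bar> \<partial>lborel)"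
    using Bc_borel_measurable[OF assms(1)] Bc_borel_measurable[OF assms(2)]
    by (intro abs_integral_bounded_mult_le integrable_heat[OF t]) (auto simp: intg_prim_def)
  then show "\<bar>intg_fun (conv_heat F t) x y - intg_fun (conv_heat G t) x y\<bar>
      \<le> anorm (\<lambda>x y. intg_prim F x y - intg_prim G x y)"
    using intg_fun_conv_heat_diff[OF assms] \<open>x < y\<close> integral_heat[OF t] heat_nonneg[of t]
    by simp
qed

lemma anorm_Ac_triangle:
  assumes "fun_in_Ac u" "fun_in_Ac v" "Bc F" "Bc G"
  shows "anorm (\<lambda>x y. intg_fun u x y - intg_fun v x y)
    \<le> anorm (\<lambda>x y. intg_fun u x y - intg_prim F x y) + anorm (\<lambda>x y. intg_prim F x y - intg_prim G x y)
      + anorm (\<lambda>x y. intg_fun v x y - intg_prim G x y)"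
proof -
  obtain Ku Kv KF KG where
    "\<And>x y. x < y \<Longrightarrow> \<bar>intg_fun u x y\<bar> \<le> Ku" "\<And>x y. x < y \<Longrightarrow> \<bar>intg_fun v x y\<bar> \<le> Kv"
    "\<And>x y. \<bar>intg_prim F x y\<bar> \<le> KF" "\<And>x y. \<bar>intg_prim G x y\<bar> \<le> KG"
    using intg_fun_bounded intg_prim_bounded assms by metis
  then have "anorm (\<lambda>x y. intg_fun u x y - intg_fun v x y)
      \<le> anorm (\<lambda>x y. intg_fun u x y - intg_prim F x y) + anorm (\<lambda>x y. intg_prim F x y - intg_fun v x y)"
    and "anorm (\<lambda>x y. intg_prim F x y - intg_fun v x y)
      \<le> anorm (\<lambda>x y. intg_prim F x y - intg_prim G x y) + anorm (\<lambda>x y. intg_prim G x y - intg_fun v x y)"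
    by (intro anorm_triangle; blast)+
  then show ?thesis
    by (simp add: anorm_minus_commute[of "intg_prim G"])
qed

lemma eventually_anorm_diff_less:
  fixes u v :: "real \<Rightarrow> real \<Rightarrow> real"
  assumes "Bc F" "Bc G" and \<epsilon>: "\<epsilon> > 0"
    and Ac: "\<And>t. t > 0 \<Longrightarrow> fun_in_Ac (\<lambda>x. u x t)" "\<And>t. t > 0 \<Longrightarrow> fun_in_Ac (\<lambda>x. v x t)"
    and u: "((\<lambda>t. anorm (\<lambda>x y. intg_fun (\<lambda>\<xi>. u \<xi> t) x y - intg_prim F x y)) \<longlongrightarrow> 0) (at_right 0)"
    and v: "((\<lambda>t. anorm (\<lambda>x y. intg_fun (\<lambda>\<xi>. v \<xi> t) x y - intg_prim G x y)) \<longlongrightarrow> 0) (at_right 0)"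
    and FG: "anorm (\<lambda>x y. intg_prim F x y - intg_prim G x y) < \<epsilon>"
  shows "\<forall>\<^sub>F t in at_right 0.
    anorm (\<lambda>x y. intg_fun (\<lambda>\<xi>. u \<xi> t) x y - intg_fun (\<lambda>\<xi>. v \<xi> t) x y) < 2 * \<epsilon>"
proof -
  have "\<forall>\<^sub>F t in at_right 0. anorm (\<lambda>x y. intg_fun (\<lambda>\<xi>. u \<xi> t) x y - intg_prim F x y) < \<epsilon> / 2"
    by (rule order_tendstoD(2)[OF u]) (use \<epsilon> in simp)
  moreover have "\<forall>\<^sub>F t in at_right 0. anorm (\<lambda>x y. intg_fun (\<lambda>\<xi>. v \<xi> t) x y - intg_prim G x y) < \<epsilon> / 2"
    by (rule order_tendstoD(2)[OF v]) (use \<epsilon> in simp)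
  moreover note eventually_at_right_less[of "0::real"]
  ultimately show ?thesis
  proof eventually_elim
    case (elim t)
    with Ac[of t] anorm_Ac_triangle[of "\<lambda>x. u x t" "\<lambda>x. v x t", OF _ _ assms(1,2)] FG show ?case
      by auto
  qed
qed

theorem corollary3p3:
  fixes F G :: "real \<Rightarrow> real"
  assumes "Bc F" and "Bc G"
  shows "(\<forall>t>0. fun_in_Ac (conv_heat F t) \<and> fun_in_Ac (conv_heat G t) \<and>
            anorm (\<lambda>x y. intg_fun (conv_heat F t) x y - intg_fun (conv_heat G t) x y)
              \<le> anorm (\<lambda>x y. intg_prim F x y - intg_prim G x y))
       \<and> (\<forall>(\<epsilon>::real) (u::real \<Rightarrow> real \<Rightarrow> real) (v::real \<Rightarrow> real \<Rightarrow> real).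
            \<epsilon> > 0
            \<and> (\<forall>t>0. fun_in_Ac (\<lambda>x. u x t) \<and> fun_in_Ac (\<lambda>x. v x t))
            \<and> ((\<lambda>t. anorm (\<lambda>x y. intg_fun (\<lambda>\<xi>. u \<xi> t) x y - intg_prim F x y)) \<longlongrightarrow> 0) (at_right 0)
            \<and> ((\<lambda>t. anorm (\<lambda>x y. intg_fun (\<lambda>\<xi>. v \<xi> t) x y - intg_prim G x y)) \<longlongrightarrow> 0) (at_right 0)
            \<and> anorm (\<lambda>x y. intg_prim F x y - intg_prim G x y) < \<epsilon>
            \<longrightarrow> (\<forall>\<^sub>F t in at_right 0.
                   anorm (\<lambda>x y. intg_fun (\<lambda>\<xi>. u \<xi> t) x y - intg_fun (\<lambda>\<xi>. v \<xi> t) x y) < 2 * \<epsilon>))"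
proof (intro conjI allI impI)
  fix t :: real assume "t > 0"
  then show "fun_in_Ac (conv_heat F t)" "fun_in_Ac (conv_heat G t)"
    and "anorm (\<lambda>x y. intg_fun (conv_heat F t) x y - intg_fun (conv_heat G t) x y)
      \<le> anorm (\<lambda>x y. intg_prim F x y - intg_prim G x y)"
    using fun_Ac_prim_conv_heat anorm_conv_heat_diff_le assms by (auto simp: fun_in_Ac_def)
next
  fix \<epsilon> :: real and u v :: "real \<Rightarrow> real \<Rightarrow> real"
  assume "\<epsilon> > 0
            \<and> (\<forall>t>0. fun_in_Ac (\<lambda>x. u x t) \<and> fun_in_Ac (\<lambda>x. v x t))
            \<and> ((\<lambda>t. anorm (\<lambda>x y. intg_fun (\<lambda>\<xi>. u \<xi> t) x y - intg_prim F x y)) \<longlongrightarrow> 0) (at_right 0)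
            \<and> ((\<lambda>t. anorm (\<lambda>x y. intg_fun (\<lambda>\<xi>. v \<xi> t) x y - intg_prim G x y)) \<longlongrightarrow> 0) (at_right 0)
            \<and> anorm (\<lambda>x y. intg_prim F x y - intg_prim G x y) < \<epsilon>"
  then show "\<forall>\<^sub>F t in at_right 0.
      anorm (\<lambda>x y. intg_fun (\<lambda>\<xi>. u \<xi> t) x y - intg_fun (\<lambda>\<xi>. v \<xi> t) x y) < 2 * \<epsilon>"
    by (intro eventually_anorm_diff_less[OF assms]) auto
qed

end
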